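(* For every $\mathrm{PTL}\times\mathbf{S5}$ formula $\varphi$, let $t_1(\varphi)$ be the $\mathrm{SLTL}$ formula obtained from $\varphi$ by replacing every occurrence of $\Diamond$ by $\Diamond_{*}$ and every occurrence of $\Box$ by $\Box_{*}$. Then $\varphi$ is $\mathrm{PTL}\times\mathbf{S5}$-satisfiable if and only if $t_1(\varphi)$ is $\mathrm{SLTL}$-satisfiable.
   Context: Fix a countably infinite set $\mathcal{P}$ of propositional variables and a countably infinite set $\mathcal{S}$ of standpoint symbols containing a distinguished universal standpoint symbol $*$. SLTL: formulae are given by $\varphi ::= p \mid s \preceq s' \mid \neg\varphi \mid \varphi\wedge\varphi \mid \Diamond_s\varphi \mid \Box_s\varphi \mid X\varphi \mid \varphi\,U\,\varphi$ with $p\in\mathcal{P}$, $s,s'\in\mathcal{S}$. A model is $M=(\Pi,\lambda)$ where $\Pi\neq\emptyset$ is a set of traces $\sigma:\mathbb{N}\to 2^{\mathcal{P}}$ and $\lambda:\mathcal{S}\to 2^{\Pi}\setminus\{\emptyset\}$ with $\lambda( * )=\Pi$. For $\sigma\in\Pi$, $i\in\mathbb{N}$: $M,\sigma,i\models p$ iff $p\in\sigma(i)$; $M,\sigma,i\models s\preceq s'$ iff $\lambda(s)\subseteq\lambda(s')$; Boolean clauses as usual; $M,\sigma,i\models\Diamond_s\psi$ iff $M,\sigma',i\models\psi$ for some $\sigma'\in\lambda(s)$; $M,\sigma,i\models\Box_s\psi$ iff $M,\sigma',i\models\psi$ for all $\sigma'\in\lambda(s)$; $M,\sigma,i\models X\psi$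 iff $M,\sigma,i+1\models\psi$; $M,\sigma,i\models\psi\,U\,\chi$ iff there is $i'\ge i$ with $M,\sigma,i'\models\chi$ and $M,\sigma,i''\models\psi$ for all $i\le i''<i'$. A formula $\varphi$ is SLTL-satisfiable iff there exist a model $M=(\Pi,\lambda)$ and $\sigma\in\Pi$ with $M,\sigma,0\models\varphi$. $\mathrm{PTL}\times\mathbf{S5}$: formulae are given by $\varphi ::= p \mid \neg\varphi\mid\varphi\wedge\varphi\mid\Diamond\varphi\mid\Box\varphi\mid X\varphi\mid\varphi\,U\,\varphi$. A model is $M=(\mathbb{N}\times W,R,L)$ with $W\neq\emptyset$, $R$ an equivalence relation on $W$, and $L:\mathbb{N}\times W\to 2^{\mathcal{P}}$. Semantics: $M,(n,w)\models p$ iff $p\in L(n,w)$; Boolean clauses as usual; $M,(n,w)\models\Diamond\psi$ iff $M,(n,w')\models\psi$ for some $w'$ with $wRw'$; $M,(n,w)\models\Box\psi$ iff $M,(n,w')\models\psi$ for all $w'$ with $wRw'$; $M,(n,w)\models X\psi$ iff $M,(n+1,w)\models\psi$; $M,(n,w)\models\psi\,U\,\chi$ iff there is $n'\ge n$ with $M,(n',w)\models\chi$ and $M,(n'',w)\models\psi$ for all $n\le n''<n'$. A formula is satisfiable iff it holds at some $(n,w)$ of some model. *)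

theory Defs
  imports Main
begin

(* Propositional variables and standpoint symbols are both encoded by nat
   (countably infinite).  The standpoint symbol 0 is the universal standpoint *. *)
type_synonym pvar = nat
type_synonym stsym = nat

definition univ_st :: stsym where "univ_st = 0"

type_synonym trace = "nat \<Rightarrow> pvar set"

datatype sltl =
    SProp pvar
  | SSharp stsym stsym
  | SNot sltl
  | SAnd sltl sltl
  | SDia stsym sltl
  | SBox stsym sltl
  | SNext sltl
  | SUntil sltl sltl

definition sltl_model :: "trace set \<Rightarrow> (stsym \<Rightarrow> trace set) \<Rightarrow> bool" where
  "sltl_model Pi lam \<longleftrightarrow> Pi \<noteq> {} \<and> (\<forall>s. lam s \<subseteq> Pi \<and> lam s \<noteq> {}) \<and> lam univ_st = Pi"

fun sltl_sem :: "trace set \<Rightarrow> (stsym \<Rightarrow> trace set) \<Rightarrow> trace \<Rightarrow> nat \<Rightarrow> sltl \<Rightarrow> bool" where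
  "sltl_sem Pi lam \<sigma> i (SProp p) \<longleftrightarrow> p \<in> \<sigma> i"
| "sltl_sem Pi lam \<sigma> i (SSharp s s') \<longleftrightarrow> lam s \<subseteq> lam s'"
| "sltl_sem Pi lam \<sigma> i (SNot \<psi>) \<longleftrightarrow> \<not> sltl_sem Pi lam \<sigma> i \<psi>"
| "sltl_sem Pi lam \<sigma> i (SAnd \<psi> \<chi>) \<longleftrightarrow> sltl_sem Pi lam \<sigma> i \<psi> \<and> sltl_sem Pi lam \<sigma> i \<chi>"
| "sltl_sem Pi lam \<sigma> i (SDia s \<psi>) \<longleftrightarrow> (\<exists>\<sigma>'\<in>lam s. sltl_sem Pi lam \<sigma>' i \<psi>)"
| "sltl_sem Pi lam \<sigma> i (SBox s \<psi>) \<longleftrightarrow> (\<forall>\<sigma>'\<in>lam s. sltl_sem Pi lam \<sigma>' i \<psi>)"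
| "sltl_sem Pi lam \<sigma> i (SNext \<psi>) \<longleftrightarrow> sltl_sem Pi lam \<sigma> (Suc i) \<psi>"
| "sltl_sem Pi lam \<sigma> i (SUntil \<psi> \<chi>) \<longleftrightarrow>
     (\<exists>i'\<ge>i. sltl_sem Pi lam \<sigma> i' \<chi> \<and> (\<forall>i''. i \<le> i'' \<and> i'' < i' \<longrightarrow> sltl_sem Pi lam \<sigma> i'' \<psi>))"

definition sltl_sat :: "sltl \<Rightarrow> bool" where
  "sltl_sat \<phi> \<longleftrightarrow> (\<exists>Pi lam \<sigma>. sltl_model Pi lam \<and> \<sigma> \<in> Pi \<and> sltl_sem Pi lam \<sigma> 0 \<phi>)"

datatype ptl =
    PProp pvar
  | PNot ptl
  | PAnd ptl ptl
  | PDia ptl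
  | PBox ptl
  | PNext ptl
  | PUntil ptl ptl

definition ptl_model :: "'w set \<Rightarrow> ('w \<times> 'w) set \<Rightarrow> bool" where
  "ptl_model W R \<longleftrightarrow> W \<noteq> {} \<and> equiv W R"

fun ptl_sem :: "'w set \<Rightarrow> ('w \<times> 'w) set \<Rightarrow> (nat \<Rightarrow> 'w \<Rightarrow> pvar set) \<Rightarrow> nat \<Rightarrow> 'w \<Rightarrow> ptl \<Rightarrow> bool" where
  "ptl_sem W R L n w (PProp p) \<longleftrightarrow> p \<in> L n w"
| "ptl_sem W R L n w (PNot \<psi>) \<longleftrightarrow> \<not> ptl_sem W R L n w \<psi>"
| "ptl_sem W R L n w (PAnd \<psi> \<chi>) \<longleftrightarrow> ptl_sem W R L n w \<psi> \<and> ptl_sem W R L n w \<chi>"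
| "ptl_sem W R L n w (PDia \<psi>) \<longleftrightarrow> (\<exists>w'. (w, w') \<in> R \<and> ptl_sem W R L n w' \<psi>)"
| "ptl_sem W R L n w (PBox \<psi>) \<longleftrightarrow> (\<forall>w'. (w, w') \<in> R \<longrightarrow> ptl_sem W R L n w' \<psi>)"
| "ptl_sem W R L n w (PNext \<psi>) \<longleftrightarrow> ptl_sem W R L (Suc n) w \<psi>"
| "ptl_sem W R L n w (PUntil \<psi> \<chi>) \<longleftrightarrow>
     (\<exists>n'\<ge>n. ptl_sem W R L n' w \<chi> \<and> (\<forall>n''. n \<le> n'' \<and> n'' < n' \<longrightarrow> ptl_sem W R L n'' w \<psi>))"

definition ptl_sat_in :: "'w itself \<Rightarrow> ptl \<Rightarrow> bool" where
  "ptl_sat_in _ \<phi> \<longleftrightarrow> (\<exists>(W::'w set) R L n w. ptl_model W R \<and> w \<in> W \<and> ptl_sem W R L n w \<phi>)"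

fun t1 :: "ptl \<Rightarrow> sltl" where
  "t1 (PProp p) = SProp p"
| "t1 (PNot \<psi>) = SNot (t1 \<psi>)"
| "t1 (PAnd \<psi> \<chi>) = SAnd (t1 \<psi>) (t1 \<chi>)"
| "t1 (PDia \<psi>) = SDia univ_st (t1 \<psi>)"
| "t1 (PBox \<psi>) = SBox univ_st (t1 \<psi>)"
| "t1 (PNext \<psi>) = SNext (t1 \<psi>)"
| "t1 (PUntil \<psi> \<chi>) = SUntil (t1 \<psi>) (t1 \<chi>)"

end

(* An SLTL model in which every standpoint denotes the whole trace set is a PTL x S5 model
   with a single equivalence class whose worlds are traces, and on it t1 commutes with the
   semantics.  Conversely, if a PTL x S5 model satisfies phi at (n, w), send each world of the
   class of w to its trace read from time n on.  Distinct worlds may carry the same trace, so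
   this map is only a bounded morphism onto the resulting trace model, which is enough to
   preserve truth. *)

theory Submission
  imports Defs
begin

lemma ptl_sem_shift:
  "ptl_sem W R L (n + i) w \<phi> \<longleftrightarrow> ptl_sem W R (\<lambda>j. L (n + j)) i w \<phi>"
proof (induction \<phi> arbitrary: i w)
  case (PUntil \<psi> \<chi>)
  have shift_ex: "(\<exists>m\<ge>n + i. P m) \<longleftrightarrow> (\<exists>j\<ge>i. P (n + j))" for P
    by (metis add_le_cancel_left le_add1 le_add_diff_inverse le_trans)
  have shift_all: "(\<forall>m. n + i \<le> m \<and> m < n + j \<longrightarrow> P m) \<longleftrightarrow> (\<forall>k. i \<le> k \<and> k < j \<longrightarrow> P (n + k))"
    for P j by (metis add_le_cancel_left add_less_cancel_left le_add1 le_add_diff_inverse le_trans)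
  show ?case
    using PUntil.IH by (simp add: shift_ex shift_all)
qed (simp_all flip: add_Suc_right)

lemma ptl_sem_bounded_morphism:
  assumes label: "\<And>i u. u \<in> D \<Longrightarrow> L' i (f u) = L i u"
    and back_forth: "\<And>u. u \<in> D \<Longrightarrow> R' `` {f u} = f ` (R `` {u})"
    and closed: "\<And>u. u \<in> D \<Longrightarrow> R `` {u} \<subseteq> D"
    and "v \<in> D"
  shows "ptl_sem W' R' L' i (f v) \<phi> \<longleftrightarrow> ptl_sem W R L i v \<phi>"
  using \<open>v \<in> D\<close>
proof (induction \<phi> arbitrary: i v)
  case (PDia \<psi>)
  have "ptl_sem W' R' L' i (f v) (PDia \<psi>) \<longleftrightarrow> (\<exists>v' \<in> R' `` {f v}. ptl_sem W' R' L' i v' \<psi>)"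
    by auto
  also have "\<dots> \<longleftrightarrow> (\<exists>u \<in> R `` {v}. ptl_sem W' R' L' i (f u) \<psi>)"
    by (simp add: back_forth[OF PDia.prems])
  also have "\<dots> \<longleftrightarrow> (\<exists>u \<in> R `` {v}. ptl_sem W R L i u \<psi>)"
    using PDia.IH closed[OF PDia.prems] by blast
  finally show ?case
    by auto
next
  case (PBox \<psi>)
  have "ptl_sem W' R' L' i (f v) (PBox \<psi>) \<longleftrightarrow> (\<forall>v' \<in> R' `` {f v}. ptl_sem W' R' L' i v' \<psi>)"
    by auto
  also have "\<dots> \<longleftrightarrow> (\<forall>u \<in> R `` {v}. ptl_sem W' R' L' i (f u) \<psi>)"
    by (simp add: back_forth[OF PBox.prems])
  also have "\<dots> \<longleftrightarrow> (\<forall>u \<in> R `` {v}. ptl_sem W R L i u \<psi>)"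
    using PBox.IH closed[OF PBox.prems] by blast
  finally show ?case
    by auto
qed (auto simp: label)

lemma ptl_sem_universal_iff_sltl_sem_t1:
  assumes "lam univ_st = Pi" and "\<sigma> \<in> Pi"
  shows "ptl_sem Pi (Pi \<times> Pi) (\<lambda>i \<tau>. \<tau> i) i \<sigma> \<phi> \<longleftrightarrow> sltl_sem Pi lam \<sigma> i (t1 \<phi>)"
  using assms(2) by (induction \<phi> arbitrary: \<sigma> i) (auto simp: assms(1))

lemma ptl_model_universal: "\<sigma> \<in> Pi \<Longrightarrow> ptl_model Pi (Pi \<times> Pi)"
  unfolding ptl_model_def equiv_def refl_on_def sym_def trans_def by auto

lemma ptl_sem_class_traces:
  fixes L :: "nat \<Rightarrow> 'w \<Rightarrow> pvar set" and n :: nat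
  assumes "equiv W R" and "w \<in> W"
  defines "tr \<equiv> \<lambda>u j. L (n + j) u"
  shows "ptl_sem W R L n w \<phi> \<longleftrightarrow>
    ptl_sem (tr ` (R `` {w})) (tr ` (R `` {w}) \<times> tr ` (R `` {w})) (\<lambda>i \<tau>. \<tau> i) 0 (tr w) \<phi>"
proof -
  have class_eq: "R `` {u} = R `` {w}" if "u \<in> R `` {w}" for u
    using that assms(1) by (simp add: equiv_class_eq_iff)
  have "w \<in> R `` {w}"
    using assms(1,2) by (rule equiv_class_self)
  have "ptl_sem (tr ` (R `` {w})) (tr ` (R `` {w}) \<times> tr ` (R `` {w})) (\<lambda>i \<tau>. \<tau> i) 0 (tr w) \<phi>
      \<longleftrightarrow> ptl_sem W R (\<lambda>j. L (n + j)) 0 w \<phi>"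
  proof (rule ptl_sem_bounded_morphism[where D = "R `` {w}"])
    fix u assume "u \<in> R `` {w}"
    then show "(tr ` (R `` {w}) \<times> tr ` (R `` {w})) `` {tr u} = tr ` (R `` {u})"
      by (auto simp: class_eq)
    show "R `` {u} \<subseteq> R `` {w}"
      using \<open>u \<in> R `` {w}\<close> by (simp add: class_eq)
  qed (use \<open>w \<in> R `` {w}\<close> in \<open>simp_all add: tr_def\<close>)
  also have "\<dots> \<longleftrightarrow> ptl_sem W R L n w \<phi>"
    using ptl_sem_shift[of W R L n 0 w \<phi>] by simp
  finally show ?thesis ..
qed

theorem lemma1:
  fixes \<phi> :: ptl
  shows "((\<exists>(T::'w itself). ptl_sat_in T \<phi>) \<longrightarrow> sltl_sat (t1 \<phi>))
       \<and> (sltl_sat (t1 \<phi>) \<longrightarrow> ptl_sat_in TYPE(trace) \<phi>)"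
proof safe
  fix T :: "'w itself"
  assume "ptl_sat_in T \<phi>"
  then obtain W :: "'w set" and R L n w
    where "equiv W R" "w \<in> W" and sat: "ptl_sem W R L n w \<phi>"
    unfolding ptl_sat_in_def ptl_model_def by blast
  define Pi where "Pi = (\<lambda>u j. L (n + j) u) ` (R `` {w})"
  have "w \<in> R `` {w}"
    using \<open>equiv W R\<close> \<open>w \<in> W\<close> by (rule equiv_class_self)
  then have "sltl_model Pi (\<lambda>_. Pi)" and "(\<lambda>j. L (n + j) w) \<in> Pi"
    unfolding sltl_model_def Pi_def by auto
  moreover have "sltl_sem Pi (\<lambda>_. Pi) (\<lambda>j. L (n + j) w) 0 (t1 \<phi>)"
    using sat ptl_sem_class_traces[OF \<open>equiv W R\<close> \<open>w \<in> W\<close>]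
      ptl_sem_universal_iff_sltl_sem_t1[OF _ \<open>(\<lambda>j. L (n + j) w) \<in> Pi\<close>]
    unfolding Pi_def by simp
  ultimately show "sltl_sat (t1 \<phi>)"
    unfolding sltl_sat_def by blast
next
  assume "sltl_sat (t1 \<phi>)"
  then obtain Pi lam \<sigma> where "sltl_model Pi lam" "\<sigma> \<in> Pi" "sltl_sem Pi lam \<sigma> 0 (t1 \<phi>)"
    unfolding sltl_sat_def by blast
  then have "ptl_sem Pi (Pi \<times> Pi) (\<lambda>i \<tau>. \<tau> i) 0 \<sigma> \<phi>"
    using ptl_sem_universal_iff_sltl_sem_t1[of lam Pi \<sigma> 0 \<phi>] by (simp add: sltl_model_def)
  then show "ptl_sat_in TYPE(trace) \<phi>"
    using ptl_model_universal[OF \<open>\<sigma> \<in> Pi\<close>] \<open>\<sigma> \<in> Pi\<close> unfolding ptl_sat_in_def by blast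
qed

end
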